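(* Let $F$ be an imaginary CM field. Let $\rho:G_F\to\operatorname{GL}_n(\overline{\mathbb{Q}}_\ell)$ and $\sigma:G_F\to\operatorname{GL}_m(\overline{\mathbb{Q}}_\ell)$ be polarizable, irreducible Galois representations. (1) If $n$ is odd, then $\rho$ is totally odd. (2) If $\rho\otimes\sigma$ is irreducible and two of $\{\rho,\sigma,\rho\otimes\sigma\}$ are totally odd, then all three are totally odd.
   Context: $F$ is a totally imaginary quadratic extension of a totally real field $F^+$, and $\delta_{F/F^+}$ is the quadratic character of $G_{F^+}$ attached to $F/F^+$. For an infinite place $v$ of $F^+$, $c_v\in G_{F^+}$ denotes a complex conjugation associated to $v$. For continuous $r:G_F\to\operatorname{GL}_n(\overline{\mathbb{Q}}_\ell)$ and $\mu:G_{F^+}\to\overline{\mathbb{Q}}_\ell^\times$, the pair $(r,\mu)$ is polarized if for some (equivalently every) infinite place $v$ of $F^+$ there are $\epsilon_v\in\{\pm1\}$ and a non-degenerate pairing $\langle\ ,\ \rangle_v$ on $\overline{\mathbb{Q}}_\ell^n$ with $\langle x,y\rangle_v=\epsilon_v\langle y,x\rangle_v$ and $\langle r(g)x,r(c_vgc_v)y\rangle_v=\mu(g)\langle x,y\rangle_v$ for all $x,y$ and $g\in G_F$, and moreover (after replacing $\mu$ by $\mu\delta_{F/F^+}$ if necessary) $\epsilon_v=-\mu(c_v)$ for all $v$. $r$ is polarizable if such a $\mu$ exists. A polarized $(r,\mu)$ is totally odd if $\epsilon_v=1$ for all $v\mid\infty$; a polarizable irreducible $r$ is called totally odd if it is totally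 odd with respect to its polarization. If $(r,\mu)$ and $(s,\chi)$ are polarized then $(r\otimes s,\mu\chi\delta_{F/F^+})$ is polarized; this is the polarization used for $\rho\otimes\sigma$. *)

theory Defs
  imports "HOL-Analysis.Analysis" "HOL-Computational_Algebra.Polynomial" "HOL-Algebra.Group"
begin

text \<open>G plays the role of G_{F+}; the subset H of its carrier plays the
 role of the index-two subgroup G_F; cc v is a complex conjugation attached to the infinite
 place v of F+.  The coefficient field is an algebraically closed field 'k of characteristic 0
 (standing for the algebraic closure of Q_l).  A representation of H of dimension CARD('n) is a
 map into 'k^'n^'n.\<close>

definition CM_setting :: "('g, 'b) monoid_scheme \<Rightarrow> 'g set \<Rightarrow> ('v \<Rightarrow> 'g) \<Rightarrow> bool" where
  "CM_setting G H cc \<longleftrightarrow> group G \<and> subgroup H G \<and> H \<noteq> carrier G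
     \<and> (\<forall>g\<in>carrier G - H. \<forall>h\<in>carrier G - H. g \<otimes>\<^bsub>G\<^esub> h \<in> H)
     \<and> finite (UNIV :: 'v set)
     \<and> (\<forall>v. cc v \<in> carrier G - H \<and> cc v \<otimes>\<^bsub>G\<^esub> cc v = \<one>\<^bsub>G\<^esub>)"

text \<open>The quadratic character attached to H (i.e. to F/F+).\<close>
definition quad_char :: "'g set \<Rightarrow> 'g \<Rightarrow> 'k::field" where
  "quad_char H g = (if g \<in> H then 1 else - 1)"

definition is_character :: "('g, 'b) monoid_scheme \<Rightarrow> ('g \<Rightarrow> 'k::field) \<Rightarrow> bool" where
  "is_character G \<mu> \<longleftrightarrow> (\<forall>g\<in>carrier G. \<forall>h\<in>carrier G. \<mu> (g \<otimes>\<^bsub>G\<^esub> h) = \<mu> g * \<mu> h)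
     \<and> \<mu> \<one>\<^bsub>G\<^esub> = 1"

definition is_rep :: "('g, 'b) monoid_scheme \<Rightarrow> 'g set \<Rightarrow> ('g \<Rightarrow> 'k::field ^'n^'n) \<Rightarrow> bool" where
  "is_rep G H r \<longleftrightarrow> (\<forall>g\<in>H. \<forall>h\<in>H. r (g \<otimes>\<^bsub>G\<^esub> h) = r g ** r h) \<and> r \<one>\<^bsub>G\<^esub> = mat 1"

definition is_subspace :: "('k::field ^'n) set \<Rightarrow> bool" where
  "is_subspace W \<longleftrightarrow> 0 \<in> W \<and> (\<forall>x\<in>W. \<forall>y\<in>W. x + y \<in> W) \<and> (\<forall>a. \<forall>x\<in>W. a *s x \<in> W)"

definition irreducible_rep :: "('g, 'b) monoid_scheme \<Rightarrow> 'g set \<Rightarrow> ('g \<Rightarrow> 'k::field ^'n^'n) \<Rightarrow> bool" where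
  "irreducible_rep G H r \<longleftrightarrow> is_rep G H r \<and>
     (\<forall>W. is_subspace W \<and> (\<forall>g\<in>H. \<forall>x\<in>W. r g *v x \<in> W) \<longrightarrow> W = {0} \<or> W = UNIV)"

definition pairing :: "'k::field ^'n^'n \<Rightarrow> 'k^'n \<Rightarrow> 'k^'n \<Rightarrow> 'k" where
  "pairing J x y = (\<Sum>i\<in>UNIV. \<Sum>j\<in>UNIV. x $ i * J $ i $ j * y $ j)"

definition nondegenerate :: "'k::field ^'n^'n \<Rightarrow> bool" where
  "nondegenerate J \<longleftrightarrow> (\<forall>x. (\<forall>y. pairing J x y = 0) \<longrightarrow> x = 0)"

definition pol_pairing ::
  "('g, 'b) monoid_scheme \<Rightarrow> 'g set \<Rightarrow> ('v \<Rightarrow> 'g) \<Rightarrow> ('g \<Rightarrow> 'k::field ^'n^'n) \<Rightarrow> ('g \<Rightarrow> 'k)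
    \<Rightarrow> 'v \<Rightarrow> 'k \<Rightarrow> 'k^'n^'n \<Rightarrow> bool" where
  "pol_pairing G H cc r \<mu> v \<epsilon> J \<longleftrightarrow> nondegenerate J
     \<and> (\<forall>x y. pairing J x y = \<epsilon> * pairing J y x)
     \<and> (\<forall>g\<in>H. \<forall>x y. pairing J (r g *v x) (r (cc v \<otimes>\<^bsub>G\<^esub> g \<otimes>\<^bsub>G\<^esub> cc v) *v y)
                     = \<mu> g * pairing J x y)"

definition polarized ::
  "('g, 'b) monoid_scheme \<Rightarrow> 'g set \<Rightarrow> ('v \<Rightarrow> 'g) \<Rightarrow> ('g \<Rightarrow> 'k::field ^'n^'n) \<Rightarrow> ('g \<Rightarrow> 'k) \<Rightarrow> bool" where
  "polarized G H cc r \<mu> \<longleftrightarrow> is_rep G H r \<and> is_character G \<mu> \<and>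
     (\<forall>v. \<exists>\<epsilon> J. (\<epsilon> = 1 \<or> \<epsilon> = -1) \<and> pol_pairing G H cc r \<mu> v \<epsilon> J \<and> \<epsilon> = - \<mu> (cc v))"

definition totally_odd ::
  "('g, 'b) monoid_scheme \<Rightarrow> 'g set \<Rightarrow> ('v \<Rightarrow> 'g) \<Rightarrow> ('g \<Rightarrow> 'k::field ^'n^'n) \<Rightarrow> ('g \<Rightarrow> 'k) \<Rightarrow> bool" where
  "totally_odd G H cc r \<mu> \<longleftrightarrow> polarized G H cc r \<mu> \<and> (\<forall>v. \<exists>J. pol_pairing G H cc r \<mu> v 1 J)"

definition tensor_rep :: "('g \<Rightarrow> 'k::field ^'n^'n) \<Rightarrow> ('g \<Rightarrow> 'k ^'m^'m) \<Rightarrow> 'g \<Rightarrow> 'k ^('n \<times> 'm)^('n \<times> 'm)" where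
  "tensor_rep r s g = (\<chi> p. \<chi> q. r g $ fst p $ fst q * s g $ snd p $ snd q)"

end

theory Submission
  imports Defs
begin

text \<open>Polarizing pairings are handled through their Gram matrices \<open>J\<close>: the conditions read
  \<open>J\<^sup>T = \<epsilon> J\<close> and \<open>r(g)\<^sup>T J r(c g c) = \<mu>(g) J\<close>.
  In odd dimension a skew-symmetric \<open>J\<close> satisfies \<open>det J = - det J\<close>, so it is singular and every
  sign is \<open>+1\<close>.
  For irreducible \<open>r\<close> the sign at \<open>v\<close> is determined by \<open>\<mu>\<close>: if a symmetric \<open>S\<close> and a
  skew-symmetric \<open>T\<close> both polarize \<open>(r, \<mu>)\<close>, then some \<open>S + t T\<close> is singular (\<open>t\<close> is a root of
  \<open>det (S + t T)\<close>, a polynomial with leading coefficient \<open>det T \<noteq> 0\<close>); its kernel is \<open>H\<close>-stable,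
  hence everything, so \<open>S = - t T\<close> is both symmetric and skew, i.e. zero.
  Hence \<open>r\<close> is totally odd iff \<open>\<mu>(c\<^sub>v) = -1\<close> for all \<open>v\<close>.
  The Kronecker product of polarizing pairings of \<open>\<rho>\<close> and \<open>\<sigma>\<close> polarizes \<open>\<rho> \<otimes> \<sigma>\<close> with the
  character \<open>\<mu> \<psi> \<delta>\<close>, and \<open>\<delta>(c\<^sub>v) = -1\<close>; of the three conditions \<open>\<mu>(c\<^sub>v) = -1\<close>,
  \<open>\<psi>(c\<^sub>v) = -1\<close>, \<open>\<mu>(c\<^sub>v) \<psi>(c\<^sub>v) = 1\<close> any two imply the third.\<close>

section \<open>Pairings as Gram matrices\<close>

lemma pairing_eq_sum_matrix_vector_mult: "pairing J x y = (\<Sum>i\<in>UNIV. x $ i * (J *v y) $ i)"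
  by (simp add: pairing_def matrix_vector_mult_def sum_distrib_left mult.assoc)

lemma pairing_eq_sum_vector_matrix_mult: "pairing J x y = (\<Sum>j\<in>UNIV. (x v* J) $ j * y $ j)"
  unfolding pairing_def vector_matrix_mult_def
  by (simp add: sum_distrib_left mult.commute) (rule sum.swap)

lemma pairing_matrix_vector_mult:
  fixes A B :: "'a::field^'n^'n"
  shows "pairing J (A *v x) (B *v y) = pairing (transpose A ** J ** B) x y"
proof -
  have "(A *v x) v* J = x v* (transpose A ** J)"
    by (simp flip: vector_matrix_mul_assoc)
  then have "pairing J (A *v x) (B *v y) = pairing B (x v* (transpose A ** J)) y"
    by (simp add: pairing_eq_sum_vector_matrix_mult[of J] pairing_eq_sum_matrix_vector_mult[of B])
  also have "\<dots> = pairing (transpose A ** J ** B) x y"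
    by (simp add: pairing_eq_sum_vector_matrix_mult vector_matrix_mul_assoc)
  finally show ?thesis .
qed

lemma pairing_axis: "pairing J (axis i 1) (axis j 1) = J $ i $ j"
  unfolding pairing_def axis_def by (simp add: mult_delta_left mult_delta_right)

lemma pairing_eq_iff: "(\<forall>x y. pairing J x y = pairing K x y) \<longleftrightarrow> J = K"
  by (metis pairing_axis vec_eq_iff)

lemma pairing_transpose: "pairing (transpose J) x y = pairing J y x"
  unfolding pairing_def transpose_def by (simp add: mult_ac) (rule sum.swap)

text \<open>Over a general field there is no scalar multiplication of matrices; \<open>c J\<close> is written
  \<open>mat c ** J\<close>.\<close>

lemma mat_matrix_mult: "mat c ** A = (\<chi> i j. c * A $ i $ j)"
  by (simp add: matrix_matrix_mult_def mat_def vec_eq_iff if_distrib if_distribR cong: if_cong)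

lemma matrix_mat_mult_commute: "A ** mat c = mat c ** (A :: 'a::comm_semiring_1^'n^'m)"
  by (simp add: matrix_matrix_mult_def mat_def vec_eq_iff if_distrib if_distribR mult.commute
      cong: if_cong)

lemma matrix_add_rdistrib: "(A + B) ** C = A ** C + B ** (C :: 'a::semiring_1^'p^'n)"
  by (simp add: matrix_matrix_mult_def vec_eq_iff algebra_simps sum.distrib)

lemma matrix_mat_mult_left_commute:
  "A ** (mat c ** B) = mat c ** (A ** (B :: 'a::comm_semiring_1^'p^'n))"
  by (metis matrix_mul_assoc matrix_mat_mult_commute)

lemma pairing_mat_matrix_mult: "pairing (mat c ** J) x y = c * pairing J x y"
  by (simp add: pairing_def mat_matrix_mult sum_distrib_left mult_ac)

lemma nondegenerate_iff_invertible: "nondegenerate J \<longleftrightarrow> invertible J"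
proof -
  have "(\<forall>y. pairing J x y = 0) \<longleftrightarrow> transpose J *v x = 0" for x
  proof
    assume "\<forall>y. pairing J x y = 0"
    then show "transpose J *v x = 0"
      using pairing_eq_sum_vector_matrix_mult[of J x "axis _ 1"]
      by (simp add: vec_eq_iff axis_def if_distrib if_distribR cong: if_cong)
  qed (simp add: pairing_eq_sum_vector_matrix_mult)
  then have "nondegenerate J \<longleftrightarrow> (\<exists>B. B ** transpose J = mat 1)"
    by (simp add: nondegenerate_def matrix_left_invertible_ker)
  then show ?thesis
    using left_invertible_transpose invertible_right_inverse by blast
qed

lemma pol_pairing_iff_matrix:
  "pol_pairing G H cc r \<mu> v \<epsilon> J \<longleftrightarrow> invertible J \<and> transpose J = mat \<epsilon> ** J
     \<and> (\<forall>g\<in>H. transpose (r g) ** J ** r (cc v \<otimes>\<^bsub>G\<^esub> g \<otimes>\<^bsub>G\<^esub> cc v) = mat (\<mu> g) ** J)"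
proof -
  have "(\<forall>x y. pairing J x y = \<epsilon> * pairing J y x) \<longleftrightarrow> (\<forall>x y. pairing J y x = \<epsilon> * pairing J x y)"
    by blast
  also have "\<dots> \<longleftrightarrow> transpose J = mat \<epsilon> ** J"
    by (simp add: pairing_eq_iff[symmetric] pairing_transpose pairing_mat_matrix_mult)
  finally show ?thesis
    by (simp add: pol_pairing_def nondegenerate_iff_invertible pairing_matrix_vector_mult
        pairing_mat_matrix_mult pairing_eq_iff[symmetric])
qed

section \<open>Kronecker products\<close>

definition kronecker :: "'a::times^'c^'r \<Rightarrow> 'a^'d^'s \<Rightarrow> 'a^('c \<times> 'd)^('r \<times> 's)" where
  "kronecker A B = (\<chi> p q. A $ fst p $ fst q * B $ snd p $ snd q)"

lemma tensor_rep_eq_kronecker: "tensor_rep r s g = kronecker (r g) (s g)"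
  unfolding tensor_rep_def kronecker_def ..

lemma kronecker_mult:
  fixes A :: "'a::comm_semiring_1^'c^'r" and B :: "'a^'d^'s"
  shows "kronecker A B ** kronecker C D = kronecker (A ** C) (B ** D)"
proof -
  have "(\<Sum>k\<in>UNIV. A $ a $ fst k * B $ b $ snd k * (C $ fst k $ c * D $ snd k $ d))
      = (\<Sum>i\<in>UNIV. A $ a $ i * C $ i $ c) * (\<Sum>j\<in>UNIV. B $ b $ j * D $ j $ d)" for a b c d
    by (simp add: sum_product sum.cartesian_product case_prod_beta mult_ac)
  then show ?thesis
    by (simp add: kronecker_def matrix_matrix_mult_def vec_eq_iff)
qed

lemma transpose_kronecker: "transpose (kronecker A B) = kronecker (transpose A) (transpose B)"
  by (simp add: kronecker_def transpose_def vec_eq_iff)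

lemma kronecker_mat: "kronecker (mat a) (mat b) = mat (a * b :: 'a::semiring_1)"
  by (simp add: kronecker_def mat_def vec_eq_iff)

lemma kronecker_mat_matrix_mult:
  fixes A :: "'a::comm_semiring_1^'c^'r" and B :: "'a^'d^'s"
  shows "kronecker (mat a ** A) (mat b ** B) = mat (a * b) ** kronecker A B"
  by (simp add: kronecker_mult[symmetric] kronecker_mat)

lemma invertible_kronecker:
  fixes A :: "'a::field^'n^'n" and B :: "'a^'m^'m"
  assumes "invertible A" "invertible B"
  shows "invertible (kronecker A B)"
proof -
  obtain A' B' where "A ** A' = mat 1" "A' ** A = mat 1" "B ** B' = mat 1" "B' ** B = mat 1"
    using assms unfolding invertible_def by blast
  then show ?thesis
    unfolding invertible_def by (metis kronecker_mult kronecker_mat mult_1)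
qed

section \<open>The index-two subgroup\<close>

lemma CM_mult_mem_iff:
  fixes G (structure)
  assumes setting: "CM_setting G H cc" and g: "g \<in> carrier G" and h: "h \<in> carrier G"
  shows "g \<otimes>\<^bsub>G\<^esub> h \<in> H \<longleftrightarrow> (g \<in> H \<longleftrightarrow> h \<in> H)"
proof -
  interpret group G using setting by (simp add: CM_setting_def)
  interpret subgroup H G using setting by (simp add: CM_setting_def)
  have "g \<otimes> h \<notin> H" if "g \<in> H" "h \<notin> H"
    by (metis that g h inv_closed m_closed l_inv l_one m_assoc m_inv_closed)
  moreover have "g \<otimes> h \<notin> H" if "g \<notin> H" "h \<in> H"
    by (metis that g h inv_closed m_closed r_inv r_one m_assoc m_inv_closed)
  moreover have "g \<otimes> h \<in> H" if "g \<notin> H" "h \<notin> H"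
    using setting that g h by (simp add: CM_setting_def)
  ultimately show ?thesis
    by (metis m_closed)
qed

lemma CM_conj_mem_iff:
  fixes G (structure)
  assumes setting: "CM_setting G H cc" and g: "g \<in> carrier G"
  shows "cc v \<otimes>\<^bsub>G\<^esub> g \<otimes>\<^bsub>G\<^esub> cc v \<in> H \<longleftrightarrow> g \<in> H"
proof -
  interpret group G using setting by (simp add: CM_setting_def)
  have "cc v \<in> carrier G" "cc v \<notin> H" using setting by (auto simp: CM_setting_def)
  then show ?thesis using CM_mult_mem_iff[OF setting] g by simp
qed

lemma CM_conj_conj:
  fixes G (structure)
  assumes setting: "CM_setting G H cc" and g: "g \<in> carrier G"
  shows "cc v \<otimes>\<^bsub>G\<^esub> (cc v \<otimes>\<^bsub>G\<^esub> g \<otimes>\<^bsub>G\<^esub> cc v) \<otimes>\<^bsub>G\<^esub> cc v = g"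
proof -
  interpret group G using setting by (simp add: CM_setting_def)
  have "cc v \<in> carrier G" "cc v \<otimes> cc v = \<one>" using setting by (auto simp: CM_setting_def)
  then show ?thesis using g by (simp add: m_assoc[symmetric]) (simp add: m_assoc)
qed

lemma quad_char_cc: "CM_setting G H cc \<Longrightarrow> quad_char H (cc v) = -1"
  by (simp add: CM_setting_def quad_char_def)

lemma quad_char_is_character:
  assumes setting: "CM_setting G H cc"
  shows "is_character G (quad_char H)"
proof -
  have "\<one>\<^bsub>G\<^esub> \<in> H" using setting by (simp add: CM_setting_def subgroup.one_closed)
  then show ?thesis
    using CM_mult_mem_iff[OF setting] by (simp add: is_character_def quad_char_def)
qed

section \<open>The sign of a polarization\<close>

lemma is_rep_right_inverse:
  fixes G (structure)
  assumes "group G" "subgroup H G" "is_rep G H r" "g \<in> H"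
  shows "r g ** r (inv\<^bsub>G\<^esub> g) = mat 1"
proof -
  interpret group G by fact
  interpret subgroup H G by fact
  have "inv g \<in> H" using assms(4) by (rule m_inv_closed)
  then show ?thesis using assms(3,4) unfolding is_rep_def by (metis r_inv mem_carrier)
qed

lemma equivariant_singular_matrix_eq_0:
  fixes G (structure) and r :: "'g \<Rightarrow> 'k::field^'n^'n"
  assumes setting: "CM_setting G H cc" and irr: "irreducible_rep G H r"
    and equivariant: "\<forall>g\<in>H. transpose (r g) ** K ** r (cc v \<otimes> g \<otimes> cc v) = mat (\<mu> g) ** K"
    and singular: "\<not> invertible K"
  shows "K = 0"
proof -
  have group: "group G" and sub: "subgroup H G" using setting by (simp_all add: CM_setting_def)
  have rep: "is_rep G H r" using irr by (simp add: irreducible_rep_def)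
  define W where "W = {y. K *v y = 0}"
  have "is_subspace W"
    by (simp add: W_def is_subspace_def matrix_vector_right_distrib vector_scalar_commute)
  moreover have "r h *v y \<in> W" if h: "h \<in> H" and y: "y \<in> W" for h y
  proof -
    define g where "g = cc v \<otimes> h \<otimes> cc v"
    have "h \<in> carrier G" using h sub by (simp add: subgroup.mem_carrier)
    then have g: "g \<in> H" and h_eq: "cc v \<otimes> g \<otimes> cc v = h"
      using h CM_conj_mem_iff[OF setting] CM_conj_conj[OF setting] by (simp_all add: g_def)
    have "(K *v (r h *v y)) v* r g = (transpose (r g) ** K ** r h) *v y"
      by (simp flip: matrix_vector_mul_assoc)
    also have "\<dots> = (mat (\<mu> g) ** K) *v y"
      using equivariant g h_eq by auto
    also have "\<dots> = 0" using y by (simp add: W_def flip: matrix_vector_mul_assoc)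
    finally have "(K *v (r h *v y)) v* r g = 0" .
    then have "(K *v (r h *v y)) v* (r g ** r (inv g)) = 0"
      by (simp flip: vector_matrix_mul_assoc)
    then show ?thesis
      using is_rep_right_inverse[OF group sub rep g] by (simp add: W_def)
  qed
  moreover have "W \<noteq> {0}"
    using singular by (auto simp: W_def invertible_left_inverse matrix_left_invertible_ker)
  ultimately have "W = UNIV" using irr by (auto simp: irreducible_rep_def)
  then show "K = 0" by (auto simp: W_def matrix_eq)
qed

lemma prod_linear_poly_degree_coeff:
  fixes a b :: "'i \<Rightarrow> 'a::comm_ring_1"
  assumes "finite S"
  shows "degree (\<Prod>i\<in>S. [:a i, b i:]) \<le> card S
    \<and> coeff (\<Prod>i\<in>S. [:a i, b i:]) (card S) = (\<Prod>i\<in>S. b i)"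
  using assms
proof (induction S rule: finite_induct)
  case empty
  then show ?case by simp
next
  case (insert x F)
  let ?p = "\<Prod>i\<in>F. [:a i, b i:]"
  have "degree ([:a x, b x:] * ?p) \<le> Suc (card F)"
    using degree_mult_le[of "[:a x, b x:]" ?p] degree_pCons_le[of "a x" "[:b x:]"] insert.IH
    by simp
  moreover have "coeff ?p (Suc (card F)) = 0"
    using insert.IH by (simp add: coeff_eq_0)
  ultimately show ?case
    using insert by (simp add: mult_pCons_left)
qed

lemma exists_singular_pencil:
  fixes A B :: "'k::alg_closed_field^'n^'n"
  assumes "invertible B"
  shows "\<exists>t. \<not> invertible (A + mat t ** B)"
proof -
  define P where "P = (\<Sum>p\<in>{p. p permutes UNIV}.
    smult (of_int (sign p)) (\<Prod>i\<in>UNIV. [:A $ i $ p i, B $ i $ p i:]))"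
  have poly_P: "poly P t = det (A + mat t ** B)" for t
    unfolding P_def det_def by (simp add: poly_sum poly_prod mat_matrix_mult mult_ac)
  have "coeff (\<Prod>i\<in>UNIV. [:A $ i $ p i, B $ i $ p i:]) CARD('n) = (\<Prod>i\<in>UNIV. B $ i $ p i)" for p
    by (rule conjunct2[OF prod_linear_poly_degree_coeff[OF finite_class.finite_UNIV]])
  then have "coeff P CARD('n) = det B"
    unfolding P_def det_def by (simp add: coeff_sum)
  then have "degree P \<ge> CARD('n)"
    using assms by (metis invertible_det_nz le_degree)
  then have "degree P > 0"
    using zero_less_card_finite[where 'a='n] by linarith
  then obtain t where "poly P t = 0"
    using alg_closed_imp_poly_has_root by blast
  then show ?thesis using poly_P invertible_det_nz by metis
qed

lemma det_mat_matrix_mult: "det (mat c ** A) = c ^ CARD('n) * det (A :: 'a::comm_ring_1^'n^'n)"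
proof -
  have "mat c ** A = (\<chi> i. c *s A $ i)" by (simp add: mat_matrix_mult vec_eq_iff)
  then show ?thesis using det_rows_mul[of "\<lambda>_. c" "\<lambda>i. A $ i"] by simp
qed

lemma even_card_if_invertible_skew_symmetric:
  fixes J :: "'k::field_char_0^'n^'n"
  assumes "invertible J" and "transpose J = mat (-1) ** J"
  shows "even CARD('n)"
proof (rule ccontr)
  assume "odd CARD('n)"
  then have "det J = - det J"
    using det_transpose[of J] assms(2) by (simp add: det_mat_matrix_mult)
  then have "det J + det J = 0"
    by (metis add.right_inverse)
  then show False using assms(1) by (simp add: invertible_det_nz flip: mult_2)
qed

lemma equivariant_pencil:
  fixes P Q S T :: "'a::comm_ring_1^'n^'n"
  assumes "P ** S ** Q = mat c ** S" and "P ** T ** Q = mat c ** T"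
  shows "P ** (S + mat t ** T) ** Q = mat c ** (S + mat t ** T)"
proof -
  have "P ** (S + mat t ** T) ** Q = P ** S ** Q + mat t ** (P ** T ** Q)"
    by (simp add: matrix_add_ldistrib matrix_add_rdistrib matrix_mul_assoc matrix_mat_mult_commute)
  also have "\<dots> = mat c ** S + mat t ** (mat c ** T)"
    by (simp only: assms)
  also have "\<dots> = mat c ** (S + mat t ** T)"
    by (simp only: matrix_add_ldistrib matrix_mat_mult_left_commute[of "mat c"])
  finally show ?thesis .
qed

lemma symmetric_eq_0_if_skew_multiple:
  fixes S T :: "'k::field_char_0^'n^'n"
  assumes S: "transpose S = S" and T: "transpose T = mat (-1) ** T" and pencil: "S + mat t ** T = 0"
  shows "S = 0"
proof -
  have pencil_entry: "S $ i $ j + t * T $ i $ j = 0" for i j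
  proof -
    have "(S + mat t ** T) $ i $ j = 0" using pencil by simp
    then show ?thesis by (simp add: mat_matrix_mult)
  qed
  have S_sym: "S $ j $ i = S $ i $ j" for i j
  proof -
    have "transpose S $ i $ j = S $ i $ j" using S by simp
    then show ?thesis by (simp add: transpose_def)
  qed
  have T_skew: "T $ j $ i = - T $ i $ j" for i j
  proof -
    have "transpose T $ i $ j = (mat (-1) ** T) $ i $ j" using T by simp
    then show ?thesis by (simp add: transpose_def mat_matrix_mult)
  qed
  have "S $ i $ j + S $ i $ j = 0" for i j
    using pencil_entry[of i j] pencil_entry[of j i]
    unfolding S_sym[of i j] T_skew[of i j] by (simp add: algebra_simps)
  then show ?thesis by (simp add: vec_eq_iff flip: mult_2)
qed

lemma pol_pairing_sign_unique:
  fixes G (structure) and r :: "'g \<Rightarrow> 'k::{alg_closed_field, field_char_0}^'n^'n"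
  assumes setting: "CM_setting G H cc" and irr: "irreducible_rep G H r"
    and "pol_pairing G H cc r \<mu> v \<epsilon> J" "\<epsilon> = 1 \<or> \<epsilon> = -1"
    and "pol_pairing G H cc r \<mu> v \<epsilon>' J'" "\<epsilon>' = 1 \<or> \<epsilon>' = -1"
  shows "\<epsilon> = \<epsilon>'"
proof -
  have opposite_signs_absurd: False
    if "pol_pairing G H cc r \<mu> v 1 S" and "pol_pairing G H cc r \<mu> v (-1) T" for S T
  proof -
    let ?c = "\<lambda>g. cc v \<otimes> g \<otimes> cc v"
    have S: "invertible S" "transpose S = S"
      "\<And>g. g \<in> H \<Longrightarrow> transpose (r g) ** S ** r (?c g) = mat (\<mu> g) ** S"
      using that(1) by (simp_all add: pol_pairing_iff_matrix)
    have T: "invertible T" "transpose T = mat (-1) ** T"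
      "\<And>g. g \<in> H \<Longrightarrow> transpose (r g) ** T ** r (?c g) = mat (\<mu> g) ** T"
      using that(2) by (simp_all add: pol_pairing_iff_matrix)
    obtain t where singular: "\<not> invertible (S + mat t ** T)"
      using exists_singular_pencil T(1) by blast
    have "\<forall>g\<in>H. transpose (r g) ** (S + mat t ** T) ** r (?c g) = mat (\<mu> g) ** (S + mat t ** T)"
      using S(3) T(3) by (simp add: equivariant_pencil)
    then have "S + mat t ** T = 0"
      using equivariant_singular_matrix_eq_0[OF setting irr _ singular] by blast
    then have "S = 0"
      using symmetric_eq_0_if_skew_multiple S(2) T(2) by blast
    then show False using S(1) by (metis det_0 mat_0 invertible_det_nz)
  qed
  show ?thesis
  proof (rule ccontr)
    assume "\<epsilon> \<noteq> \<epsilon>'"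
    then have "\<epsilon> = 1 \<and> \<epsilon>' = -1 \<or> \<epsilon> = -1 \<and> \<epsilon>' = 1"
      using assms(4,6) by auto
    then show False
      using opposite_signs_absurd assms(3,5) by auto
  qed
qed

lemma totally_odd_if_odd_card:
  fixes r :: "'g \<Rightarrow> 'k::field_char_0^'n^'n"
  assumes pol: "polarized G H cc r \<mu>" and odd: "odd CARD('n)"
  shows "totally_odd G H cc r \<mu>"
  unfolding totally_odd_def
proof (intro conjI allI)
  fix v
  obtain \<epsilon> J where "\<epsilon> = 1 \<or> \<epsilon> = -1" and J: "pol_pairing G H cc r \<mu> v \<epsilon> J"
    using pol unfolding polarized_def by blast
  moreover have "\<epsilon> \<noteq> -1"
    using J odd even_card_if_invertible_skew_symmetric by (auto simp: pol_pairing_iff_matrix)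
  ultimately show "\<exists>J. pol_pairing G H cc r \<mu> v 1 J" by blast
qed (rule pol)

lemma totally_odd_iff_char_cc_eq_minus_1:
  fixes r :: "'g \<Rightarrow> 'k::{alg_closed_field, field_char_0}^'n^'n"
  assumes setting: "CM_setting G H cc" and irr: "irreducible_rep G H r"
    and pol: "polarized G H cc r \<mu>"
  shows "totally_odd G H cc r \<mu> \<longleftrightarrow> (\<forall>v. \<mu> (cc v) = -1)"
proof -
  have "(\<exists>J. pol_pairing G H cc r \<mu> v 1 J) \<longleftrightarrow> \<mu> (cc v) = -1" for v
  proof -
    obtain \<epsilon> J where "\<epsilon> = 1 \<or> \<epsilon> = -1" "pol_pairing G H cc r \<mu> v \<epsilon> J" "\<epsilon> = - \<mu> (cc v)"
      using pol unfolding polarized_def by blast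
    then show ?thesis
      using pol_pairing_sign_unique[OF setting irr] by (metis minus_equation_iff)
  qed
  then show ?thesis using pol by (simp add: totally_odd_def)
qed

section \<open>Tensor products\<close>

lemma is_character_mult:
  assumes "is_character G \<alpha>" and "is_character G \<beta>"
  shows "is_character G (\<lambda>g. \<alpha> g * \<beta> g)"
  using assms unfolding is_character_def by (simp add: mult_ac)

lemma pol_pairing_kronecker:
  fixes r :: "'g \<Rightarrow> 'k::field^'n^'n" and s :: "'g \<Rightarrow> 'k^'m^'m"
  assumes "pol_pairing G H cc r \<mu> v \<epsilon> J" and "pol_pairing G H cc s \<psi> v \<epsilon>' J'"
  shows "pol_pairing G H cc (tensor_rep r s) (\<lambda>g. \<mu> g * \<psi> g * quad_char H g) v (\<epsilon> * \<epsilon>')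
    (kronecker J J')"
proof -
  let ?c = "\<lambda>g. cc v \<otimes>\<^bsub>G\<^esub> g \<otimes>\<^bsub>G\<^esub> cc v"
  have J: "invertible J" "transpose J = mat \<epsilon> ** J"
    "\<And>g. g \<in> H \<Longrightarrow> transpose (r g) ** J ** r (?c g) = mat (\<mu> g) ** J"
    using assms(1) by (simp_all add: pol_pairing_iff_matrix)
  have J': "invertible J'" "transpose J' = mat \<epsilon>' ** J'"
    "\<And>g. g \<in> H \<Longrightarrow> transpose (s g) ** J' ** s (?c g) = mat (\<psi> g) ** J'"
    using assms(2) by (simp_all add: pol_pairing_iff_matrix)
  have "transpose (kronecker J J') = mat (\<epsilon> * \<epsilon>') ** kronecker J J'"
    by (simp add: transpose_kronecker J(2) J'(2) kronecker_mat_matrix_mult)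
  moreover have "transpose (tensor_rep r s g) ** kronecker J J' ** tensor_rep r s (?c g)
      = mat (\<mu> g * \<psi> g * quad_char H g) ** kronecker J J'" if "g \<in> H" for g
    using that by (simp add: tensor_rep_eq_kronecker transpose_kronecker kronecker_mult J(3) J'(3)
        kronecker_mat_matrix_mult quad_char_def)
  ultimately show ?thesis
    by (simp add: pol_pairing_iff_matrix invertible_kronecker J(1) J'(1))
qed

lemma polarized_tensor_rep:
  fixes \<rho> :: "'g \<Rightarrow> 'k::field^'n^'n" and \<sigma> :: "'g \<Rightarrow> 'k^'m^'m"
  assumes setting: "CM_setting G H cc" and rep: "is_rep G H (tensor_rep \<rho> \<sigma>)"
    and pol_\<rho>: "polarized G H cc \<rho> \<mu>" and pol_\<sigma>: "polarized G H cc \<sigma> \<psi>"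
  shows "polarized G H cc (tensor_rep \<rho> \<sigma>) (\<lambda>g. \<mu> g * \<psi> g * quad_char H g)"
  unfolding polarized_def
proof (intro conjI allI)
  show "is_character G (\<lambda>g. \<mu> g * \<psi> g * quad_char H g)"
    using pol_\<rho> pol_\<sigma> quad_char_is_character[OF setting]
    by (intro is_character_mult) (simp_all add: polarized_def)
  fix v
  obtain \<epsilon> J where \<epsilon>: "\<epsilon> = 1 \<or> \<epsilon> = -1" "\<epsilon> = - \<mu> (cc v)"
    and J: "pol_pairing G H cc \<rho> \<mu> v \<epsilon> J"
    using pol_\<rho> unfolding polarized_def by blast
  obtain \<epsilon>' J' where \<epsilon>': "\<epsilon>' = 1 \<or> \<epsilon>' = -1" "\<epsilon>' = - \<psi> (cc v)"
    and J': "pol_pairing G H cc \<sigma> \<psi> v \<epsilon>' J'"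
    using pol_\<sigma> unfolding polarized_def by blast
  have "\<epsilon> * \<epsilon>' = 1 \<or> \<epsilon> * \<epsilon>' = -1"
    using \<epsilon>(1) \<epsilon>'(1) by auto
  moreover have "\<epsilon> * \<epsilon>' = - (\<mu> (cc v) * \<psi> (cc v) * quad_char H (cc v))"
    using \<epsilon>(2) \<epsilon>'(2) by (simp add: quad_char_cc[OF setting])
  ultimately show "\<exists>\<epsilon> J. (\<epsilon> = 1 \<or> \<epsilon> = -1)
      \<and> pol_pairing G H cc (tensor_rep \<rho> \<sigma>) (\<lambda>g. \<mu> g * \<psi> g * quad_char H g) v \<epsilon> J
      \<and> \<epsilon> = - (\<mu> (cc v) * \<psi> (cc v) * quad_char H (cc v))"
    using pol_pairing_kronecker[OF J J'] by blast
qed (rule rep)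

theorem lemma2p9:
  fixes G :: "('g, 'b) monoid_scheme" and H :: "'g set" and cc :: "'v \<Rightarrow> 'g"
    and \<rho> :: "'g \<Rightarrow> 'k::{alg_closed_field, field_char_0} ^'n^'n"
    and \<sigma> :: "'g \<Rightarrow> 'k ^'m^'m"
    and \<mu> \<psi> :: "'g \<Rightarrow> 'k"
  assumes setting: "CM_setting G H cc"
    and rho_irr: "irreducible_rep G H \<rho>" and rho_pol: "polarized G H cc \<rho> \<mu>"
    and sigma_irr: "irreducible_rep G H \<sigma>" and sigma_pol: "polarized G H cc \<sigma> \<psi>"
  shows "(odd CARD('n) \<longrightarrow> totally_odd G H cc \<rho> \<mu>)
    \<and> (irreducible_rep G H (tensor_rep \<rho> \<sigma>) \<longrightarrow>
        (let A = totally_odd G H cc \<rho> \<mu>;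
             B = totally_odd G H cc \<sigma> \<psi>;
             C = totally_odd G H cc (tensor_rep \<rho> \<sigma>) (\<lambda>g. \<mu> g * \<psi> g * quad_char H g)
         in ((A \<and> B) \<or> (A \<and> C) \<or> (B \<and> C)) \<longrightarrow> A \<and> B \<and> C))"
proof (intro conjI impI)
  show "totally_odd G H cc \<rho> \<mu>" if "odd CARD('n)"
    using totally_odd_if_odd_card[OF rho_pol that] .
next
  assume tensor_irr: "irreducible_rep G H (tensor_rep \<rho> \<sigma>)"
  then have tensor_pol: "polarized G H cc (tensor_rep \<rho> \<sigma>) (\<lambda>g. \<mu> g * \<psi> g * quad_char H g)"
    using polarized_tensor_rep[OF setting _ rho_pol sigma_pol] by (simp add: irreducible_rep_def)
  show "let A = totally_odd G H cc \<rho> \<mu>;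
             B = totally_odd G H cc \<sigma> \<psi>;
             C = totally_odd G H cc (tensor_rep \<rho> \<sigma>) (\<lambda>g. \<mu> g * \<psi> g * quad_char H g)
         in ((A \<and> B) \<or> (A \<and> C) \<or> (B \<and> C)) \<longrightarrow> A \<and> B \<and> C"
    unfolding Let_def totally_odd_iff_char_cc_eq_minus_1[OF setting rho_irr rho_pol] totally_odd_iff_char_cc_eq_minus_1[OF setting sigma_irr sigma_pol]
      totally_odd_iff_char_cc_eq_minus_1[OF setting tensor_irr tensor_pol]
    by (auto simp: quad_char_cc[OF setting] minus_equation_iff)
qed

end
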